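(* Let $(G=(V,E),(p_e))$ be an IC model instance, $\pi$ a policy, $k,d\in\mathbb{Z}^+$. Then $F(\pi,k,d)=F_L(\pi,k,d)$.
   Context: IC model: directed graph $G=(V,E)$, each edge $e$ independently live with probability $p_e\in(0,1]$. Diffusion proceeds in rounds: in each round every node activated in the previous round (seed nodes count as activated when seeded) attempts to activate each inactive out-neighbor along an edge, succeeding iff the edge is live; attempted edges become observed. A realization $\phi=(L(\phi),D(\phi))$ records the observed live and dead edges; $\phi_\emptyset=(\emptyset,\emptyset)$. A policy $\pi$ maps a pair $(S,\phi)$ (current active set, current observed realization) to a single node. The $(\pi,k,d)$-process: set $(S,\phi)=(\emptyset,\phi_\emptyset)$; repeat $k$ times: select and activate $\pi(S,\phi)$, then observe the diffusion for $d$ rounds and update $(S,\phi)$ to the current active set and observed realization; finally let the diffusion terminate. $F(\pi,k,d)$ is the expected final number of active nodes. The L-$(\pi,k,d)$-process: set $(S,\phi)=(\emptyset,\phi_\emptyset)$; repeat $k-1$ times: select and activate $\pi(S,\phi)$, then observe $d$ rounds and update $(S,\phi)$; then decide $v^*=\pi(S,\phi)$ without activating it, wait for the diffusion to terminate, then activate $v^*$ and wait for the diffusion to terminate. $F_L(\pi,k,d)$ is the expected final number of active nodes of this process. *)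

theory Defs
  imports Complex_Main
begin

text \<open>Independent Cascade model on a finite directed graph whose vertex set is the
  (finite) type 'v; E is the edge set. A world w (subset of E) fixes which edges are live.
  A diffusion state is (S, L, D, A): active set S, observed live edges L, observed dead
  edges D, and frontier A = nodes activated in the previous round (or just seeded),
  which attempt to activate their out-neighbours in the next round.\<close>

type_synonym 'v edge = "'v \<times> 'v"
type_synonym 'v realization = "'v edge set \<times> 'v edge set"
type_synonym 'v state = "'v set \<times> 'v edge set \<times> 'v edge set \<times> 'v set"
type_synonym 'v policy = "'v set \<Rightarrow> 'v realization \<Rightarrow> 'v"

definition act :: "'v state \<Rightarrow> 'v set" where
  "act st = fst st"

definition obs :: "'v state \<Rightarrow> 'v realization" where
  "obs st = (case st of (S, L, D, A) \<Rightarrow> (L, D))"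

definition frontier :: "'v state \<Rightarrow> 'v set" where
  "frontier st = (case st of (S, L, D, A) \<Rightarrow> A)"

definition round :: "'v edge set \<Rightarrow> 'v edge set \<Rightarrow> 'v state \<Rightarrow> 'v state" where
  "round E w st = (case st of (S, L, D, A) \<Rightarrow>
     (let T = {(u, v). (u, v) \<in> E \<and> u \<in> A \<and> v \<notin> S};
          N = snd ` (T \<inter> w)
      in (S \<union> N, L \<union> (T \<inter> w), D \<union> (T - w), N)))"

definition seed :: "'v \<Rightarrow> 'v state \<Rightarrow> 'v state" where
  "seed v st = (case st of (S, L, D, A) \<Rightarrow>
     (if v \<in> S then (S, L, D, A) else (S \<union> {v}, L, D, A \<union> {v})))"

definition terminate :: "'v edge set \<Rightarrow> 'v edge set \<Rightarrow> 'v state \<Rightarrow> 'v state" where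
  "terminate E w st =
     (round E w ^^ (LEAST n. frontier ((round E w ^^ n) st) = {})) st"

definition init_state :: "'v state" where
  "init_state = ({}, {}, {}, {})"

definition pstep :: "'v policy \<Rightarrow> nat \<Rightarrow> 'v edge set \<Rightarrow> 'v edge set \<Rightarrow> 'v state \<Rightarrow> 'v state" where
  "pstep \<pi> d E w st = (round E w ^^ d) (seed (\<pi> (act st) (obs st)) st)"

definition final_std :: "'v policy \<Rightarrow> nat \<Rightarrow> nat \<Rightarrow> 'v edge set \<Rightarrow> 'v edge set \<Rightarrow> 'v set" where
  "final_std \<pi> k d E w = act (terminate E w ((pstep \<pi> d E w ^^ k) init_state))"

definition final_L :: "'v policy \<Rightarrow> nat \<Rightarrow> nat \<Rightarrow> 'v edge set \<Rightarrow> 'v edge set \<Rightarrow> 'v set" where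
  "final_L \<pi> k d E w =
     (let st = (pstep \<pi> d E w ^^ (k - 1)) init_state;
          vstar = \<pi> (act st) (obs st)
      in act (terminate E w (seed vstar (terminate E w st))))"

definition world_prob :: "'v edge set \<Rightarrow> ('v edge \<Rightarrow> real) \<Rightarrow> 'v edge set \<Rightarrow> real" where
  "world_prob E p w = (\<Prod>e\<in>E. if e \<in> w then p e else 1 - p e)"

definition F :: "'v::finite edge set \<Rightarrow> ('v edge \<Rightarrow> real) \<Rightarrow> 'v policy \<Rightarrow> nat \<Rightarrow> nat \<Rightarrow> real" where
  "F E p \<pi> k d = (\<Sum>w\<in>Pow E. world_prob E p w * real (card (final_std \<pi> k d E w)))"

definition F_L :: "'v::finite edge set \<Rightarrow> ('v edge \<Rightarrow> real) \<Rightarrow> 'v policy \<Rightarrow> nat \<Rightarrow> nat \<Rightarrow> real" where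
  "F_L E p \<pi> k d = (\<Sum>w\<in>Pow E. world_prob E p w * real (card (final_L \<pi> k d E w)))"

end

theory Submission
  imports Defs
begin

text \<open>Fix the world, i.e. the set w of live edges. Every reachable state of either process
  satisfies an invariant: the frontier is active, and every live edge leaving an active
  non-frontier node ends in an active node. Under this invariant a diffusion round does not
  change the set of nodes reachable from the active set along live edges, and once the
  frontier is empty the active set is closed under live edges. Hence letting the diffusion
  terminate from active set S yields exactly the live-edge closure of S. Both processes
  perform the same first k - 1 steps and choose the same last seed v from the same state
  with active set S; the standard process ends with the closure of S plus v, the L-process
  with the closure of (closure of S) plus v, and these coincide. So the final active sets
  agree world by world, and so do their expectations.\<close>

definition cascade_invariant :: "'v edge set \<Rightarrow> 'v edge set \<Rightarrow> 'v state \<Rightarrow> bool" where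
  "cascade_invariant E w st \<longleftrightarrow>
     frontier st \<subseteq> act st \<and> (E \<inter> w) `` (act st - frontier st) \<subseteq> act st"

lemma rtrancl_Image_absorb:
  assumes "X \<subseteq> Y" and "Y \<subseteq> r\<^sup>* `` X"
  shows "r\<^sup>* `` Y = r\<^sup>* `` X"
  using assms by (blast intro: rtrancl_trans)

lemma newly_activated_eq:
  "snd ` ({(u, v). (u, v) \<in> E \<and> u \<in> A \<and> v \<notin> S} \<inter> w) = (E \<inter> w) `` A - S"
  by force

lemma act_round: "act (round E w st) = act st \<union> (E \<inter> w) `` frontier st"
  by (cases st) (auto simp: round_def act_def frontier_def Let_def newly_activated_eq)

lemma frontier_round: "frontier (round E w st) = (E \<inter> w) `` frontier st - act st"
  by (cases st) (simp add: round_def act_def frontier_def Let_def newly_activated_eq)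

lemma cascade_invariant_round:
  "cascade_invariant E w st \<Longrightarrow> cascade_invariant E w (round E w st)"
  unfolding cascade_invariant_def act_round frontier_round by blast

lemma rtrancl_Image_act_round:
  assumes "cascade_invariant E w st"
  shows "(E \<inter> w)\<^sup>* `` act (round E w st) = (E \<inter> w)\<^sup>* `` act st"
  using assms unfolding act_round cascade_invariant_def
  by (intro rtrancl_Image_absorb) auto

lemma cascade_invariant_funpow_round:
  "cascade_invariant E w st \<Longrightarrow> cascade_invariant E w ((round E w ^^ n) st)"
  by (induction n) (simp_all add: cascade_invariant_round)

lemma rtrancl_Image_act_funpow_round:
  "cascade_invariant E w st \<Longrightarrow>
     (E \<inter> w)\<^sup>* `` act ((round E w ^^ n) st) = (E \<inter> w)\<^sup>* `` act st"
  by (induction n) (simp_all add: rtrancl_Image_act_round cascade_invariant_funpow_round)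

lemma act_psubset_round:
  "frontier (round E w st) \<noteq> {} \<Longrightarrow> act st \<subset> act (round E w st)"
  unfolding act_round frontier_round by blast

lemma card_act_funpow_round:
  fixes st :: "'v::finite state"
  shows "frontier ((round E w ^^ n) st) \<noteq> {} \<Longrightarrow> n \<le> card (act ((round E w ^^ n) st))"
proof (induction n)
  case 0
  then show ?case by simp
next
  case (Suc n)
  then have "frontier ((round E w ^^ n) st) \<noteq> {}"
    by (auto simp: frontier_round)
  with Suc.IH have "n \<le> card (act ((round E w ^^ n) st))" .
  also have "\<dots> < card (act ((round E w ^^ Suc n) st))"
    using act_psubset_round[of E w "(round E w ^^ n) st"] Suc.prems
    by (simp add: psubset_card_mono)
  finally show ?case by simp
qed

lemma ex_frontier_funpow_round_empty:
  fixes st :: "'v::finite state"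
  shows "\<exists>n. frontier ((round E w ^^ n) st) = {}"
proof (rule ccontr)
  assume "\<nexists>n. frontier ((round E w ^^ n) st) = {}"
  then have "Suc (card (UNIV :: 'v set)) \<le> card (act ((round E w ^^ Suc (card (UNIV :: 'v set))) st))"
    using card_act_funpow_round by blast
  moreover have "card (act ((round E w ^^ Suc (card (UNIV :: 'v set))) st)) \<le> card (UNIV :: 'v set)"
    by (simp add: card_mono)
  ultimately show False by simp
qed

lemma terminate_closure:
  fixes st :: "'v::finite state"
  assumes "cascade_invariant E w st"
  shows "cascade_invariant E w (terminate E w st)"
    and "act (terminate E w st) = (E \<inter> w)\<^sup>* `` act st"
proof -
  define m where "m = (LEAST n. frontier ((round E w ^^ n) st) = {})"
  have terminate_eq: "terminate E w st = (round E w ^^ m) st"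
    unfolding terminate_def m_def ..
  have "frontier ((round E w ^^ m) st) = {}"
    unfolding m_def by (rule LeastI_ex) (rule ex_frontier_funpow_round_empty)
  moreover have invariant: "cascade_invariant E w ((round E w ^^ m) st)"
    using assms by (rule cascade_invariant_funpow_round)
  ultimately have "(E \<inter> w)\<^sup>* `` act ((round E w ^^ m) st) = act ((round E w ^^ m) st)"
    by (intro Image_closed_trancl) (simp add: cascade_invariant_def)
  then show "act (terminate E w st) = (E \<inter> w)\<^sup>* `` act st"
    using rtrancl_Image_act_funpow_round[OF assms] terminate_eq by simp
  show "cascade_invariant E w (terminate E w st)"
    using invariant terminate_eq by simp
qed

lemma act_seed: "act (seed v st) = insert v (act st)"
  by (cases st) (auto simp: seed_def act_def)

lemma cascade_invariant_seed:
  "cascade_invariant E w st \<Longrightarrow> cascade_invariant E w (seed v st)"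
  by (cases st) (auto simp: seed_def cascade_invariant_def act_def frontier_def)

lemma cascade_invariant_funpow_pstep:
  "cascade_invariant E w ((pstep \<pi> d E w ^^ n) init_state)"
proof (induction n)
  case 0
  then show ?case
    by (simp add: cascade_invariant_def init_state_def act_def frontier_def)
next
  case (Suc n)
  then show ?case
    by (simp add: pstep_def cascade_invariant_funpow_round cascade_invariant_seed)
qed

lemma final_std_eq_final_L:
  fixes E :: "'v::finite edge set"
  assumes "k \<ge> 1"
  shows "final_std \<pi> k d E w = final_L \<pi> k d E w"
proof -
  define st where "st = (pstep \<pi> d E w ^^ (k - 1)) init_state"
  define v where "v = \<pi> (act st) (obs st)"
  let ?R = "E \<inter> w"
  have invariant: "cascade_invariant E w st"
    unfolding st_def by (rule cascade_invariant_funpow_pstep)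
  obtain j where "k = Suc j"
    using assms by (cases k) auto
  then have "(pstep \<pi> d E w ^^ k) init_state = (round E w ^^ d) (seed v st)"
    by (simp add: st_def v_def pstep_def)
  then have "final_std \<pi> k d E w = ?R\<^sup>* `` insert v (act st)"
    using invariant unfolding final_std_def
    by (simp add: terminate_closure cascade_invariant_funpow_round cascade_invariant_seed
        rtrancl_Image_act_funpow_round act_seed)
  moreover have "final_L \<pi> k d E w = act (terminate E w (seed v (terminate E w st)))"
    unfolding final_L_def st_def v_def Let_def ..
  then have "final_L \<pi> k d E w = ?R\<^sup>* `` insert v (?R\<^sup>* `` act st)"
    using invariant by (simp add: terminate_closure cascade_invariant_seed act_seed)
  moreover have "?R\<^sup>* `` insert v (?R\<^sup>* `` act st) = ?R\<^sup>* `` insert v (act st)"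
    by (rule rtrancl_Image_absorb) auto
  ultimately show ?thesis by simp
qed

text \<open>The equality holds in every world.\<close>

theorem lemma2:
  fixes E :: "('v::finite) edge set" and p :: "'v edge \<Rightarrow> real"
    and \<pi> :: "'v policy" and k d :: nat
  assumes "\<forall>e\<in>E. 0 < p e \<and> p e \<le> 1"
    and "k \<ge> 1" and "d \<ge> 1"
  shows "F E p \<pi> k d = F_L E p \<pi> k d"
  unfolding F_def F_L_def by (simp add: final_std_eq_final_L[OF assms(2)])

end
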